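(* Let $\hat v$ be a rank-one discrete valuation on a complete field with valuation ring $R_{\hat v}$, maximal ideal $\mathfrak m_{\hat v}$, residue field $\Delta_{\hat v}$, containing a field $k$ of characteristic $0$ on which $\hat v$ is trivial, and let $\varphi:R_{\hat v}\to\Delta_{\hat v}$ be the natural homomorphism. Let $\mathbb F\subset R_{\hat v}$ and $\mathbb F'\subset\Delta_{\hat v}$ be subfields containing $k$ with $\varphi(\mathbb F)\subseteq \mathbb F'$, and let $\sigma:\mathbb F'\to\mathbb F$ be a $k$-homomorphism with $\varphi\circ\sigma=\mathrm{id}_{\mathbb F'}$. Let $\omega\in R_{\hat v}$ with $\hat v(\omega)=0$. If $\omega+\mathfrak m_{\hat v}$ is transcendental (resp. algebraic) over $\mathbb F'$, then there exists a $k$-section $\sigma':\Delta_{\hat v}\to R_{\hat v}$ of $\varphi$ (i.e. a $k$-homomorphism with $\varphi\circ\sigma'=\mathrm{id}$) extending $\sigma$ such that $\sigma'(\omega+\mathfrak m_{\hat v})$ is transcendental (resp. algebraic) over $\mathbb F$. *)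

theory Defs
  imports "HOL-Computational_Algebra.Polynomial"
begin

definition subfield :: "'a::field set \<Rightarrow> bool" where
  "subfield S \<longleftrightarrow> 0 \<in> S \<and> 1 \<in> S \<and>
     (\<forall>x\<in>S. \<forall>y\<in>S. x + y \<in> S \<and> x * y \<in> S) \<and>
     (\<forall>x\<in>S. - x \<in> S \<and> inverse x \<in> S)"

definition hom_on :: "'a::ring_1 set \<Rightarrow> ('a \<Rightarrow> 'b::ring_1) \<Rightarrow> bool" where
  "hom_on S f \<longleftrightarrow> f 1 = 1 \<and>
     (\<forall>x\<in>S. \<forall>y\<in>S. f (x + y) = f x + f y \<and> f (x * y) = f x * f y)"

definition algebraic_over :: "'a::field set \<Rightarrow> 'a \<Rightarrow> bool" where
  "algebraic_over S x \<longleftrightarrow> (\<exists>p::'a poly. p \<noteq> 0 \<and> (\<forall>i. coeff p i \<in> S) \<and> poly p x = 0)"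

definition transcendental_over :: "'a::field set \<Rightarrow> 'a \<Rightarrow> bool" where
  "transcendental_over S x \<longleftrightarrow> \<not> algebraic_over S x"

(* Rank-one discrete valuation: v is only meaningful on nonzero elements;
   values in \<int>, nontrivial (so the value group is infinite cyclic). *)
definition discrete_valuation :: "('a::field \<Rightarrow> int) \<Rightarrow> bool" where
  "discrete_valuation v \<longleftrightarrow>
     (\<forall>x y. x \<noteq> 0 \<longrightarrow> y \<noteq> 0 \<longrightarrow> v (x * y) = v x + v y) \<and>
     (\<forall>x y. x \<noteq> 0 \<longrightarrow> y \<noteq> 0 \<longrightarrow> x + y \<noteq> 0 \<longrightarrow> v (x + y) \<ge> min (v x) (v y)) \<and>
     (\<exists>x. x \<noteq> 0 \<and> v x \<noteq> 0)"

(* x and y are close to order N, i.e. v(x - y) \<ge> N (with v 0 = \<infinity>) *)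
definition vclose :: "('a::field \<Rightarrow> int) \<Rightarrow> int \<Rightarrow> 'a \<Rightarrow> 'a \<Rightarrow> bool" where
  "vclose v N x y \<longleftrightarrow> x = y \<or> v (x - y) \<ge> N"

definition v_complete :: "('a::field \<Rightarrow> int) \<Rightarrow> bool" where
  "v_complete v \<longleftrightarrow>
     (\<forall>X::nat \<Rightarrow> 'a. (\<forall>N. \<exists>M. \<forall>m\<ge>M. \<forall>n\<ge>M. vclose v N (X m) (X n)) \<longrightarrow>
        (\<exists>L. \<forall>N. \<exists>M. \<forall>n\<ge>M. vclose v N (X n) L))"

definition val_ring :: "('a::field \<Rightarrow> int) \<Rightarrow> 'a set" where
  "val_ring v = {x. x = 0 \<or> v x \<ge> 0}"

definition val_max_ideal :: "('a::field \<Rightarrow> int) \<Rightarrow> 'a set" where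
  "val_max_ideal v = {x. x = 0 \<or> v x > 0}"

definition residue_map :: "('a::field \<Rightarrow> int) \<Rightarrow> ('a \<Rightarrow> 'b::field) \<Rightarrow> bool" where
  "residue_map v \<phi> \<longleftrightarrow> hom_on (val_ring v) \<phi> \<and> \<phi> ` val_ring v = UNIV \<and>
     (\<forall>x\<in>val_ring v. \<phi> x = 0 \<longleftrightarrow> x \<in> val_max_ideal v)"

end

theory Submission
  imports Defs
begin

(* A section of phi extending sigma is the inverse of phi on a coefficient field, i.e. a subfield of
   the valuation ring that phi maps onto the residue field. Take, by Zorn's lemma, a maximal subfield M
   of the valuation ring containing sigma(F'). If a residue t were missed by M, lift it to some a and
   take a monic f over M of least degree with phi(f(a)) = 0. In characteristic 0 the derivative of f
   has smaller degree, so f'(a) is a unit; Newton's iteration converges by completeness to a root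
   alpha of f above t (Hensel). Dividing by f shows that every relation of alpha over M which holds
   modulo the maximal ideal holds exactly, so M(alpha) still lies in the valuation ring, contradicting
   maximality.
   Transcendence descends to the lift: a relation of sigma'(t) over F, divided by its coefficient of
   least valuation, reduces to a nontrivial relation of t over F'. Algebraicity lifts because the
   field homomorphism sigma' maps relations over F' to relations over F. *)

section \<open>Subfields and ring homomorphisms\<close>

lemma subfield_zero: "subfield L \<Longrightarrow> 0 \<in> L"
  and subfield_one: "subfield L \<Longrightarrow> 1 \<in> L"
  and subfield_add: "subfield L \<Longrightarrow> x \<in> L \<Longrightarrow> y \<in> L \<Longrightarrow> x + y \<in> L"
  and subfield_mult: "subfield L \<Longrightarrow> x \<in> L \<Longrightarrow> y \<in> L \<Longrightarrow> x * y \<in> L"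
  and subfield_uminus: "subfield L \<Longrightarrow> x \<in> L \<Longrightarrow> - x \<in> L"
  and subfield_inverse: "subfield L \<Longrightarrow> x \<in> L \<Longrightarrow> inverse x \<in> L"
  unfolding subfield_def by auto

lemma subfield_diff: "subfield L \<Longrightarrow> x \<in> L \<Longrightarrow> y \<in> L \<Longrightarrow> x - y \<in> L"
  using subfield_add[of L x "- y"] subfield_uminus[of L y] by simp

lemma subfield_of_nat: "subfield L \<Longrightarrow> of_nat n \<in> L"
  by (induction n) (auto simp: subfield_zero subfield_one subfield_add)

lemma subfield_sum: "subfield L \<Longrightarrow> (\<And>i. i \<in> A \<Longrightarrow> f i \<in> L) \<Longrightarrow> sum f A \<in> L"
  by (induction A rule: infinite_finite_induct) (auto simp: subfield_zero subfield_add)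

lemma subfield_Union_chain:
  assumes "C \<noteq> {}" "\<And>L. L \<in> C \<Longrightarrow> subfield L" "\<And>L M. L \<in> C \<Longrightarrow> M \<in> C \<Longrightarrow> L \<subseteq> M \<or> M \<subseteq> L"
  shows "subfield (\<Union>C)"
  unfolding subfield_def
proof (intro conjI ballI)
  obtain L where "L \<in> C" using assms(1) by blast
  then show "0 \<in> \<Union>C" "1 \<in> \<Union>C" using assms(2) subfield_zero subfield_one by blast+
next
  fix x y assume "x \<in> \<Union>C" "y \<in> \<Union>C"
  then obtain L where "L \<in> C" "x \<in> L" "y \<in> L" using assms(3) by blast
  then show "x + y \<in> \<Union>C" "x * y \<in> \<Union>C" using assms(2) subfield_add subfield_mult by blast+
next
  fix x assume "x \<in> \<Union>C"
  then obtain L where "L \<in> C" "x \<in> L" by blast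
  then show "- x \<in> \<Union>C" "inverse x \<in> \<Union>C" using assms(2) subfield_uminus subfield_inverse by blast+
qed

lemma hom_on_zero:
  assumes "hom_on S f" "0 \<in> S"
  shows "f 0 = 0"
proof -
  have "f 0 = f 0 + f 0" using assms unfolding hom_on_def by (metis add_0)
  then show ?thesis by simp
qed

lemma hom_on_UNIV_eq_zero_iff:
  fixes f :: "'a::field \<Rightarrow> 'b::field"
  assumes "hom_on UNIV f"
  shows "f x = 0 \<longleftrightarrow> x = 0"
proof
  assume "f x = 0"
  show "x = 0"
  proof (rule ccontr)
    assume "x \<noteq> 0"
    then have "f x * f (inverse x) = 1" using assms unfolding hom_on_def by (metis UNIV_I right_inverse)
    then show False using \<open>f x = 0\<close> by simp
  qed
qed (use hom_on_zero[OF assms] in simp)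

lemma subfield_image_hom:
  fixes f :: "'a::field \<Rightarrow> 'b::field"
  assumes L: "subfield L" and f: "hom_on L f"
  shows "subfield (f ` L)"
proof -
  have add: "f (x + y) = f x + f y" and mult: "f (x * y) = f x * f y" if "x \<in> L" "y \<in> L" for x y
    using f that unfolding hom_on_def by auto
  have f0: "f 0 = 0" using hom_on_zero[OF f subfield_zero[OF L]] .
  have uminus: "f (- x) = - f x" if "x \<in> L" for x
    using add[of x "- x"] subfield_uminus[OF L that] that f0 by (simp add: eq_neg_iff_add_eq_0 add.commute)
  have inverse: "f (inverse x) = inverse (f x)" if "x \<in> L" for x
  proof (cases "x = 0")
    case False
    then have "f x * f (inverse x) = 1"
      using mult[OF that subfield_inverse[OF L that]] f unfolding hom_on_def by simp
    then show ?thesis by (metis inverse_unique)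
  qed (simp add: f0)
  show ?thesis
    unfolding subfield_def
  proof (intro conjI ballI)
    show "0 \<in> f ` L" using f0 subfield_zero[OF L] by force
    show "1 \<in> f ` L" using f subfield_one[OF L] unfolding hom_on_def by force
  next
    fix a b assume "a \<in> f ` L" "b \<in> f ` L"
    then obtain x y where "x \<in> L" "y \<in> L" "a = f x" "b = f y" by blast
    then show "a + b \<in> f ` L" "a * b \<in> f ` L"
      using add mult subfield_add[OF L] subfield_mult[OF L] by (metis image_eqI)+
  next
    fix a assume "a \<in> f ` L"
    then obtain x where "x \<in> L" "a = f x" by blast
    then show "- a \<in> f ` L" "inverse a \<in> f ` L"
      using uminus inverse subfield_uminus[OF L] subfield_inverse[OF L] by (metis image_eqI)+
  qed
qed

section \<open>Polynomials with coefficients in a subset\<close>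

definition poly_over :: "'a::zero set \<Rightarrow> 'a poly \<Rightarrow> bool" where
  "poly_over S p \<longleftrightarrow> (\<forall>i. coeff p i \<in> S)"

lemma poly_over_pCons [simp]: "poly_over S (pCons c p) \<longleftrightarrow> c \<in> S \<and> poly_over S p"
  unfolding poly_over_def by (auto simp: coeff_pCons split: nat.splits)

lemma poly_over_mono: "poly_over L p \<Longrightarrow> L \<subseteq> S \<Longrightarrow> poly_over S p"
  unfolding poly_over_def by auto

lemma poly_over_zero: "0 \<in> S \<Longrightarrow> poly_over S 0"
  by (simp add: poly_over_def)

lemma poly_over_one: "subfield L \<Longrightarrow> poly_over L 1"
  by (simp add: one_pCons poly_over_zero subfield_zero subfield_one)

lemma poly_over_add: "subfield L \<Longrightarrow> poly_over L p \<Longrightarrow> poly_over L q \<Longrightarrow> poly_over L (p + q)"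
  unfolding poly_over_def by (simp add: subfield_add)

lemma poly_over_diff: "subfield L \<Longrightarrow> poly_over L p \<Longrightarrow> poly_over L q \<Longrightarrow> poly_over L (p - q)"
  unfolding poly_over_def by (simp add: subfield_diff)

lemma poly_over_uminus: "subfield L \<Longrightarrow> poly_over L p \<Longrightarrow> poly_over L (- p)"
  unfolding poly_over_def by (simp add: subfield_uminus)

lemma poly_over_mult: "subfield L \<Longrightarrow> poly_over L p \<Longrightarrow> poly_over L q \<Longrightarrow> poly_over L (p * q)"
  unfolding poly_over_def coeff_mult by (auto intro: subfield_sum subfield_mult)

lemma poly_over_smult: "subfield L \<Longrightarrow> c \<in> L \<Longrightarrow> poly_over L p \<Longrightarrow> poly_over L (smult c p)"
  unfolding poly_over_def by (simp add: subfield_mult)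

lemma poly_over_monom: "subfield L \<Longrightarrow> c \<in> L \<Longrightarrow> poly_over L (monom c n)"
  unfolding poly_over_def by (simp add: coeff_monom subfield_zero)

lemma poly_over_pderiv:
  assumes "\<And>x y. x \<in> S \<Longrightarrow> y \<in> S \<Longrightarrow> x * y \<in> S" "\<And>n. of_nat n \<in> S" "poly_over S p"
  shows "poly_over S (pderiv p)"
  using assms unfolding poly_over_def coeff_pderiv by blast

lemma poly_mem_closed:
  assumes "0 \<in> S" "\<And>x y. x \<in> S \<Longrightarrow> y \<in> S \<Longrightarrow> x + y \<in> S" "\<And>x y. x \<in> S \<Longrightarrow> y \<in> S \<Longrightarrow> x * y \<in> S"
    and "poly_over S p" "x \<in> S"
  shows "poly p x \<in> S"
  using assms(4) by (induction p) (auto intro: assms)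

lemma hom_on_poly:
  assumes f: "hom_on S f" and S: "0 \<in> S" "\<And>x y. x \<in> S \<Longrightarrow> y \<in> S \<Longrightarrow> x + y \<in> S"
      "\<And>x y. x \<in> S \<Longrightarrow> y \<in> S \<Longrightarrow> x * y \<in> S"
    and "poly_over S p" "x \<in> S"
  shows "f (poly p x) = poly (map_poly f p) (f x)"
  using assms(5)
proof (induction p)
  case (pCons a p)
  then have "poly p x \<in> S" "a \<in> S" using poly_mem_closed[OF S] \<open>x \<in> S\<close> by auto
  with pCons f \<open>x \<in> S\<close> S show ?case
    by (simp add: map_poly_pCons hom_on_zero[OF f] hom_on_def)
qed (simp add: hom_on_zero[OF f S(1)])

lemma poly_over_remainder:
  assumes L: "subfield L" and f: "poly_over L f" "lead_coeff f = 1" "degree f > 0"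
    and "poly_over L p"
  shows "\<exists>r. poly_over L r \<and> degree r < degree f \<and> f dvd p - r"
  using \<open>poly_over L p\<close>
proof (induction "degree p" arbitrary: p rule: less_induct)
  case less
  show ?case
  proof (cases "degree p < degree f")
    case True
    then show ?thesis using less.prems by force
  next
    case False
    define g where "g = smult (lead_coeff p) (monom 1 (degree p - degree f) * f)"
    have g_over: "poly_over L g"
      unfolding g_def using less.prems L f
      by (intro poly_over_smult poly_over_mult poly_over_monom) (auto simp: poly_over_def subfield_one)
    have deg_g: "degree g \<le> degree p"
      unfolding g_def using False
      by (intro order.trans[OF degree_smult_le] order.trans[OF degree_mult_le])
        (simp add: degree_monom_eq)
    have "coeff g (degree p) = lead_coeff p"
      unfolding g_def using False f coeff_mult_degree_sum[of "monom 1 (degree p - degree f)" f]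
      by (simp add: degree_monom_eq)
    then have "coeff (p - g) (degree p) = 0" by simp
    moreover have "degree (p - g) \<le> degree p" using deg_g by (simp add: degree_diff_le)
    moreover have "degree p > 0" using False f by simp
    ultimately have "degree (p - g) < degree p"
      by (metis leading_coeff_0_iff degree_0 le_neq_implies_less)
    then obtain r where r: "poly_over L r" "degree r < degree f" "f dvd p - g - r"
      using less.hyps poly_over_diff[OF L less.prems g_over] by blast
    have "f dvd g" unfolding g_def by (simp add: dvd_smult)
    then have "f dvd (p - g - r) + g" using r(3) by (rule dvd_add[rotated])
    then show ?thesis using r by (auto simp: algebra_simps)
  qed
qed

definition adjoin :: "'a::field set \<Rightarrow> 'a \<Rightarrow> 'a set" where
  "adjoin L x = {poly p x / poly q x |p q. poly_over L p \<and> poly_over L q \<and> poly q x \<noteq> 0}"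

lemma adjoinI: "poly_over L p \<Longrightarrow> poly_over L q \<Longrightarrow> poly q x \<noteq> 0 \<Longrightarrow> poly p x / poly q x \<in> adjoin L x"
  unfolding adjoin_def by blast

lemma adjoinE:
  assumes "a \<in> adjoin L x"
  obtains p q where "poly_over L p" "poly_over L q" "poly q x \<noteq> 0" "a = poly p x / poly q x"
  using assms unfolding adjoin_def by blast

lemma subset_adjoin: "subfield L \<Longrightarrow> L \<subseteq> adjoin L x"
proof
  fix c assume "subfield L" "c \<in> L"
  then show "c \<in> adjoin L x" using adjoinI[of L "[:c:]" 1 x] by (simp add: poly_over_zero subfield_zero poly_over_one)
qed

lemma mem_adjoin: "subfield L \<Longrightarrow> x \<in> adjoin L x"
  using adjoinI[of L "[:0, 1:]" 1 x] by (simp add: poly_over_zero subfield_zero subfield_one poly_over_one)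

lemma subfield_adjoin:
  assumes L: "subfield L"
  shows "subfield (adjoin L x)"
  unfolding subfield_def
proof (intro conjI ballI)
  show "0 \<in> adjoin L x" "1 \<in> adjoin L x"
    using subset_adjoin[OF L] subfield_zero[OF L] subfield_one[OF L] by auto
next
  fix a b assume "a \<in> adjoin L x" "b \<in> adjoin L x"
  then obtain p q p' q' where pq: "poly_over L p" "poly_over L q" "poly q x \<noteq> 0" "a = poly p x / poly q x"
    and pq': "poly_over L p'" "poly_over L q'" "poly q' x \<noteq> 0" "b = poly p' x / poly q' x"
    by (elim adjoinE)
  have "a + b = poly (p * q' + p' * q) x / poly (q * q') x"
    unfolding pq(4) pq'(4) using pq(3) pq'(3) by (simp add: field_simps)
  also have "\<dots> \<in> adjoin L x"
    using pq pq' L by (intro adjoinI poly_over_add poly_over_mult) auto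
  finally show "a + b \<in> adjoin L x" .
  have "a * b = poly (p * p') x / poly (q * q') x"
    using pq pq' by simp
  also have "\<dots> \<in> adjoin L x"
    using pq pq' L by (intro adjoinI poly_over_mult) auto
  finally show "a * b \<in> adjoin L x" .
next
  fix a assume "a \<in> adjoin L x"
  then obtain p q where pq: "poly_over L p" "poly_over L q" "poly q x \<noteq> 0" "a = poly p x / poly q x"
    by (elim adjoinE)
  have "- a = poly (- p) x / poly q x" using pq by simp
  also have "\<dots> \<in> adjoin L x" using pq L by (intro adjoinI poly_over_uminus) auto
  finally show "- a \<in> adjoin L x" .
  show "inverse a \<in> adjoin L x"
  proof (cases "poly p x = 0")
    case True
    then show ?thesis using pq subset_adjoin[OF L] subfield_zero[OF L] by auto
  next
    case False
    then show ?thesis using pq adjoinI[of L q p x] by simp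
  qed
qed

lemma algebraic_over_hom_image:
  fixes f :: "'b::field \<Rightarrow> 'a::field"
  assumes f: "hom_on UNIV f" and F: "\<And>y. y \<in> F' \<Longrightarrow> f y \<in> F" and t: "algebraic_over F' t"
  shows "algebraic_over F (f t)"
proof -
  obtain q where q: "q \<noteq> 0" "poly_over F' q" "poly q t = 0"
    using t unfolding algebraic_over_def poly_over_def by blast
  have f0: "f 0 = 0" using hom_on_zero[OF f] by simp
  have "poly (map_poly f q) (f t) = 0"
    using hom_on_poly[OF f, of q t] q(3) f0 by (simp add: poly_over_def)
  moreover have "map_poly f q \<noteq> 0"
    using q(1) map_poly_eq_0_iff[of f q, OF f0] hom_on_UNIV_eq_zero_iff[OF f] by blast
  moreover have "coeff (map_poly f q) i \<in> F" for i
    using q(2) F by (simp add: coeff_map_poly f0 poly_over_def)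
  ultimately show ?thesis unfolding algebraic_over_def by blast
qed

section \<open>Valued fields and their residue maps\<close>

definition val_ge :: "('a::field \<Rightarrow> int) \<Rightarrow> int \<Rightarrow> 'a \<Rightarrow> bool" where
  "val_ge v N x \<longleftrightarrow> x = 0 \<or> v x \<ge> N"

lemma val_ge_zero [simp]: "val_ge v N 0"
  by (simp add: val_ge_def)

lemma val_ge_mono: "val_ge v N x \<Longrightarrow> M \<le> N \<Longrightarrow> val_ge v M x"
  unfolding val_ge_def by auto

lemma val_ge_all_imp_zero: "(\<And>N. val_ge v N x) \<Longrightarrow> x = 0"
  using linorder_not_le unfolding val_ge_def by (metis less_add_one)

lemma vclose_iff_val_ge: "vclose v N x y \<longleftrightarrow> val_ge v N (x - y)"
  unfolding vclose_def val_ge_def by auto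

lemma val_ring_iff_val_ge: "x \<in> val_ring v \<longleftrightarrow> val_ge v 0 x"
  unfolding val_ge_def val_ring_def by simp

locale valued_field =
  fixes v :: "'a::field \<Rightarrow> int" and \<phi> :: "'a \<Rightarrow> 'b::field"
  assumes discrete_valuation: "discrete_valuation v" and residue_map: "residue_map v \<phi>"
begin

abbreviation "R \<equiv> val_ring v"

lemma v_mult: "x \<noteq> 0 \<Longrightarrow> y \<noteq> 0 \<Longrightarrow> v (x * y) = v x + v y"
  using discrete_valuation unfolding discrete_valuation_def by blast

lemma v_add: "x \<noteq> 0 \<Longrightarrow> y \<noteq> 0 \<Longrightarrow> x + y \<noteq> 0 \<Longrightarrow> v (x + y) \<ge> min (v x) (v y)"
  using discrete_valuation unfolding discrete_valuation_def by blast

lemma v_one: "v 1 = 0"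
  using v_mult[of 1 1] by simp

lemma v_uminus: "v (- x) = v x"
proof (cases "x = 0")
  case False
  have "v (-1) = 0" using v_mult[of "-1" "-1"] v_one by simp
  then show ?thesis using v_mult[of "-1" x] False by simp
qed simp

lemma v_inverse: "x \<noteq> 0 \<Longrightarrow> v (inverse x) = - v x"
  using v_mult[of x "inverse x"] v_one by simp

lemma val_ge_add: "val_ge v N x \<Longrightarrow> val_ge v N y \<Longrightarrow> val_ge v N (x + y)"
  unfolding val_ge_def using v_add[of x y] by fastforce

lemma val_ge_uminus: "val_ge v N (- x) \<longleftrightarrow> val_ge v N x"
  unfolding val_ge_def by (simp add: v_uminus)

lemma val_ge_diff: "val_ge v N x \<Longrightarrow> val_ge v N y \<Longrightarrow> val_ge v N (x - y)"
  using val_ge_add[of N x "- y"] val_ge_uminus[of N y] by simp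

lemma val_ge_mult: "val_ge v N x \<Longrightarrow> val_ge v M y \<Longrightarrow> val_ge v (N + M) (x * y)"
  unfolding val_ge_def by (cases "x = 0 \<or> y = 0") (auto simp: v_mult)

lemma val_ge_mult_val_ring: "val_ge v N x \<Longrightarrow> y \<in> R \<Longrightarrow> val_ge v N (x * y)"
  using val_ge_mult[of N x 0 y] by (simp add: val_ring_iff_val_ge)

lemma val_ring_zero: "0 \<in> R" and val_ring_one: "1 \<in> R"
  by (auto simp: val_ring_def v_one)

lemma val_ring_add: "x \<in> R \<Longrightarrow> y \<in> R \<Longrightarrow> x + y \<in> R"
  by (simp add: val_ring_iff_val_ge val_ge_add)

lemma val_ring_diff: "x \<in> R \<Longrightarrow> y \<in> R \<Longrightarrow> x - y \<in> R"
  by (simp add: val_ring_iff_val_ge val_ge_diff)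

lemma val_ring_mult: "x \<in> R \<Longrightarrow> y \<in> R \<Longrightarrow> x * y \<in> R"
  by (simp add: val_ring_iff_val_ge val_ge_mult_val_ring)

lemma val_ring_of_nat: "of_nat n \<in> R"
  by (induction n) (auto simp: val_ring_zero val_ring_one val_ring_add)

lemma poly_over_val_ring_pderiv: "poly_over R p \<Longrightarrow> poly_over R (pderiv p)"
  by (rule poly_over_pderiv[OF val_ring_mult val_ring_of_nat])

lemma poly_in_val_ring: "poly_over R p \<Longrightarrow> x \<in> R \<Longrightarrow> poly p x \<in> R"
  by (rule poly_mem_closed[OF val_ring_zero val_ring_add val_ring_mult])

lemma hom_on_phi: "hom_on R \<phi>"
  using residue_map unfolding residue_map_def by blast

lemma phi_one: "\<phi> 1 = 1"
  using hom_on_phi unfolding hom_on_def by blast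

lemma phi_zero: "\<phi> 0 = 0"
  using hom_on_zero[OF hom_on_phi val_ring_zero] .

lemma phi_add: "x \<in> R \<Longrightarrow> y \<in> R \<Longrightarrow> \<phi> (x + y) = \<phi> x + \<phi> y"
  and phi_mult: "x \<in> R \<Longrightarrow> y \<in> R \<Longrightarrow> \<phi> (x * y) = \<phi> x * \<phi> y"
  using hom_on_phi unfolding hom_on_def by blast+

lemma phi_diff: "x \<in> R \<Longrightarrow> y \<in> R \<Longrightarrow> \<phi> (x - y) = \<phi> x - \<phi> y"
  using phi_add[of "x - y" y] val_ring_diff[of x y] by (simp add: eq_diff_eq)

lemma phi_surj: "\<exists>a\<in>R. \<phi> a = t"
  using residue_map unfolding residue_map_def by (metis UNIV_I imageE)

lemma phi_eq_zero_iff: "x \<in> R \<Longrightarrow> \<phi> x = 0 \<longleftrightarrow> val_ge v 1 x"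
  using residue_map unfolding residue_map_def val_max_ideal_def val_ge_def by auto

lemma phi_eq_iff: "x \<in> R \<Longrightarrow> y \<in> R \<Longrightarrow> \<phi> x = \<phi> y \<longleftrightarrow> val_ge v 1 (x - y)"
  using phi_eq_zero_iff[of "x - y"] phi_diff[of x y] val_ring_diff[of x y] by simp

lemma phi_poly: "poly_over R p \<Longrightarrow> x \<in> R \<Longrightarrow> \<phi> (poly p x) = poly (map_poly \<phi> p) (\<phi> x)"
  by (rule hom_on_poly[OF hom_on_phi val_ring_zero val_ring_add val_ring_mult])

lemma inverse_in_val_ring:
  assumes "x \<in> R" "\<phi> x \<noteq> 0"
  shows "inverse x \<in> R"
proof -
  have "x \<noteq> 0" "v x = 0"
    using assms phi_eq_zero_iff[of x] unfolding val_ring_def val_ge_def by auto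
  then show ?thesis by (simp add: val_ring_def v_inverse)
qed

lemma val_ge_divide_unit: "val_ge v N y \<Longrightarrow> x \<in> R \<Longrightarrow> \<phi> x \<noteq> 0 \<Longrightarrow> val_ge v N (y / x)"
  using inverse_in_val_ring val_ge_mult_val_ring by (simp add: divide_inverse)

lemma phi_subfield_nonzero:
  assumes "subfield L" "L \<subseteq> R" "c \<in> L" "c \<noteq> 0"
  shows "\<phi> c \<noteq> 0"
proof -
  have "inverse c \<in> L" using subfield_inverse assms by blast
  then have "\<phi> c * \<phi> (inverse c) = 1" using phi_mult[of c "inverse c"] assms phi_one by auto
  then show ?thesis by auto
qed

lemma inj_on_phi_subfield:
  assumes "subfield L" "L \<subseteq> R"
  shows "inj_on \<phi> L"
proof (rule inj_onI)
  fix x y assume xy: "x \<in> L" "y \<in> L" "\<phi> x = \<phi> y"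
  then have "\<phi> (x - y) = 0" using phi_diff[of x y] assms(2) by auto
  then show "x = y" using phi_subfield_nonzero[OF assms subfield_diff[OF assms(1) xy(1,2)]] by auto
qed

definition residue_faithful :: "'a set \<Rightarrow> 'a \<Rightarrow> bool" where
  "residue_faithful L x \<longleftrightarrow> (\<forall>p. poly_over L p \<longrightarrow> \<phi> (poly p x) = 0 \<longrightarrow> poly p x = 0)"

lemma adjoin_subset_val_ring:
  assumes L: "subfield L" "L \<subseteq> R" and x: "x \<in> R" "residue_faithful L x"
  shows "adjoin L x \<subseteq> R"
proof
  fix a assume "a \<in> adjoin L x"
  then obtain p q where pq: "poly_over L p" "poly_over L q" "poly q x \<noteq> 0" "a = poly p x / poly q x"
    by (elim adjoinE)
  have "poly p x \<in> R" "poly q x \<in> R"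
    using pq(1,2) poly_in_val_ring[OF poly_over_mono[OF _ L(2)] x(1)] by auto
  moreover have "\<phi> (poly q x) \<noteq> 0" using x(2) pq(2,3) unfolding residue_faithful_def by blast
  ultimately show "a \<in> R"
    using inverse_in_val_ring val_ring_mult by (simp add: pq(4) divide_inverse)
qed

lemma exists_min_degree_residual_relation:
  assumes L: "subfield L" "L \<subseteq> R" and a: "a \<in> R"
    and rel: "poly_over L g" "g \<noteq> 0" "\<phi> (poly g a) = 0"
  obtains f where "poly_over L f" "lead_coeff f = 1" "degree f > 0" "\<phi> (poly f a) = 0"
    "\<And>g. poly_over L g \<Longrightarrow> g \<noteq> 0 \<Longrightarrow> degree g < degree f \<Longrightarrow> \<phi> (poly g a) \<noteq> 0"
proof -
  obtain f0 where f0: "poly_over L f0" "f0 \<noteq> 0" "\<phi> (poly f0 a) = 0"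
    and min: "\<And>g. poly_over L g \<Longrightarrow> g \<noteq> 0 \<Longrightarrow> \<phi> (poly g a) = 0 \<Longrightarrow> degree f0 \<le> degree g"
    using ex_has_least_nat[of "\<lambda>g. poly_over L g \<and> g \<noteq> 0 \<and> \<phi> (poly g a) = 0" g degree] rel
    by blast
  define c where "c = inverse (lead_coeff f0)"
  have c: "c \<in> L" "c \<noteq> 0"
    using subfield_inverse[OF L(1)] f0(1,2) unfolding c_def poly_over_def by auto
  define f where "f = smult c f0"
  have f: "poly_over L f" "lead_coeff f = 1" "degree f = degree f0"
    using poly_over_smult[OF L(1) c(1) f0(1)] f0(2) c by (auto simp: f_def c_def)
  have f0R: "poly f0 a \<in> R" using poly_in_val_ring[OF poly_over_mono[OF f0(1) L(2)] a] .
  have "\<phi> (poly f a) = 0" using phi_mult[OF _ f0R, of c] c(1) L(2) f0(3) by (auto simp: f_def)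
  moreover have "degree f > 0"
  proof (rule ccontr)
    assume "\<not> degree f > 0"
    then have "f = [:1:]" using f(2) degree_0_id[of f] by simp
    then show False using \<open>\<phi> (poly f a) = 0\<close> phi_one by simp
  qed
  moreover have "\<phi> (poly g a) \<noteq> 0" if "poly_over L g" "g \<noteq> 0" "degree g < degree f" for g
    using min[OF that(1,2)] that(3) f(3) by auto
  ultimately show ?thesis using that f by blast
qed

lemma exists_normalizing_coeff:
  assumes "p \<noteq> 0"
  obtains j where "coeff p j \<noteq> 0" "poly_over R (smult (inverse (coeff p j)) p)"
proof -
  let ?S = "{i. coeff p i \<noteq> 0}"
  have "finite ?S" by (rule finite_subset[of _ "{..degree p}"]) (auto intro: le_degree)
  moreover have "?S \<noteq> {}" using assms leading_coeff_0_iff by blast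
  ultimately obtain j where j: "coeff p j \<noteq> 0"
    and min: "\<And>i. coeff p i \<noteq> 0 \<Longrightarrow> v (coeff p j) \<le> v (coeff p i)"
    using ex_is_arg_min_if_finite[of ?S "\<lambda>i. v (coeff p i)"] by (auto simp: is_arg_min_linorder)
  have "coeff (smult (inverse (coeff p j)) p) i \<in> R" for i
  proof (cases "coeff p i = 0")
    case False
    then have "v (inverse (coeff p j) * coeff p i) = v (coeff p i) - v (coeff p j)"
      using v_mult v_inverse j by simp
    then show ?thesis using min[OF False] by (simp add: val_ring_def)
  qed (simp add: val_ring_zero)
  then show ?thesis using that j unfolding poly_over_def by blast
qed

lemma transcendental_if_residue_transcendental:
  assumes F: "subfield F" "\<phi> ` F \<subseteq> F'" and z: "z \<in> R" and tr: "transcendental_over F' (\<phi> z)"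
  shows "transcendental_over F z"
  unfolding transcendental_over_def
proof
  assume "algebraic_over F z"
  then obtain p where p: "p \<noteq> 0" "poly_over F p" "poly p z = 0"
    unfolding algebraic_over_def poly_over_def by blast
  obtain j where j: "coeff p j \<noteq> 0" and pR: "poly_over R (smult (inverse (coeff p j)) p)"
    using exists_normalizing_coeff[OF p(1)] .
  define q where "q = map_poly \<phi> (smult (inverse (coeff p j)) p)"
  have "coeff q j = 1" using j phi_one phi_zero by (simp add: q_def coeff_map_poly)
  then have "q \<noteq> 0" by auto
  moreover have "poly q (\<phi> z) = 0" using phi_poly[OF pR z] p(3) phi_zero by (simp add: q_def)
  moreover have "coeff q i \<in> F'" for i
  proof -
    have "inverse (coeff p j) * coeff p i \<in> F"
      using p(2) F(1) subfield_mult subfield_inverse unfolding poly_over_def by blast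
    then show ?thesis using F(2) phi_zero by (auto simp: q_def coeff_map_poly)
  qed
  ultimately have "algebraic_over F' (\<phi> z)" unfolding algebraic_over_def by blast
  with tr show False unfolding transcendental_over_def by blast
qed

section \<open>Hensel's lemma\<close>

lemma poly_taylor2:
  assumes "poly_over R p" "a \<in> R" "h \<in> R"
  shows "\<exists>c\<in>R. poly p (a + h) = poly p a + h * poly (pderiv p) a + h\<^sup>2 * c"
  using assms(1)
proof (induction p)
  case 0
  then show ?case using val_ring_zero by auto
next
  case (pCons c0 q)
  then obtain c where c: "c \<in> R" "poly q (a + h) = poly q a + h * poly (pderiv q) a + h\<^sup>2 * c"
    by auto
  define c' where "c' = poly (pderiv q) a + a * c + h * c"
  have "c' \<in> R"
    unfolding c'_def using pCons.prems c assms
    by (simp add: val_ring_add val_ring_mult poly_in_val_ring poly_over_val_ring_pderiv)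
  moreover have "poly (pCons c0 q) (a + h) = poly (pCons c0 q) a + h * poly (pderiv (pCons c0 q)) a + h\<^sup>2 * c'"
    by (simp add: pderiv_pCons c c'_def algebra_simps power2_eq_square)
  ultimately show ?case by blast
qed

lemma val_ge_poly_diff:
  assumes "poly_over R p" "a \<in> R" "b \<in> R" "val_ge v N (b - a)"
  shows "val_ge v N (poly p b - poly p a)"
proof -
  obtain c where c: "c \<in> R" "poly p (a + (b - a)) = poly p a + (b - a) * poly (pderiv p) a + (b - a)\<^sup>2 * c"
    using poly_taylor2[OF assms(1,2) val_ring_diff[OF assms(3,2)]] by blast
  have "poly p b - poly p a = (b - a) * (poly (pderiv p) a + (b - a) * c)"
    using c(2) by (simp add: algebra_simps power2_eq_square)
  moreover have "poly (pderiv p) a + (b - a) * c \<in> R"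
    using c assms by (simp add: val_ring_add val_ring_mult val_ring_diff poly_in_val_ring
        poly_over_val_ring_pderiv)
  ultimately show ?thesis using val_ge_mult_val_ring assms(4) by simp
qed

lemma newton_step:
  assumes f: "poly_over R f" and x: "x \<in> R" and d: "\<phi> (poly (pderiv f) x) \<noteq> 0"
    and N: "0 \<le> N" "val_ge v N (poly f x)"
  defines "h \<equiv> poly f x / poly (pderiv f) x"
  shows "val_ge v N h" "val_ge v (2 * N) (poly f (x - h))"
proof -
  have dR: "poly (pderiv f) x \<in> R" using poly_in_val_ring[OF poly_over_val_ring_pderiv[OF f] x] .
  show h: "val_ge v N h" unfolding h_def using val_ge_divide_unit[OF N(2) dR d] .
  then have "- h \<in> R" using val_ge_mono[OF h N(1)] by (simp add: val_ring_iff_val_ge val_ge_uminus)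
  then obtain c where c: "c \<in> R"
      "poly f (x + - h) = poly f x + - h * poly (pderiv f) x + (- h)\<^sup>2 * c"
    using poly_taylor2[OF f x] by meson
  have "poly (pderiv f) x \<noteq> 0" using d phi_zero by auto
  then have "h * poly (pderiv f) x = poly f x" by (simp add: h_def)
  then have "poly f (x - h) = (h * h) * c" using c(2) by (simp add: power2_eq_square)
  moreover have "val_ge v (2 * N) (h * h)" using val_ge_mult[OF h h] by (simp only: mult_2)
  ultimately show "val_ge v (2 * N) (poly f (x - h))" using val_ge_mult_val_ring c(1) by simp
qed

lemma poly_limit_root:
  assumes f: "poly_over R f" and s: "\<And>n. s n \<in> R" "\<And>n. val_ge v (int n) (poly f (s n))"
    and \<alpha>: "\<alpha> \<in> R" "\<And>N. \<exists>M. \<forall>n\<ge>M. val_ge v N (s n - \<alpha>)"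
  shows "poly f \<alpha> = 0"
proof (rule val_ge_all_imp_zero)
  fix N
  obtain M where M: "\<forall>n\<ge>M. val_ge v N (s n - \<alpha>)" using \<alpha>(2) by blast
  define n where "n = max M (nat N)"
  have "val_ge v N (s n - \<alpha>)" using M by (simp add: n_def)
  then have close: "val_ge v N (poly f (s n) - poly f \<alpha>)" using val_ge_poly_diff[OF f \<alpha>(1) s(1)] by blast
  have "val_ge v N (poly f (s n))" using val_ge_mono[OF s(2)[of n], of N] by (simp add: n_def)
  from val_ge_diff[OF this close]
  have "val_ge v N (poly f (s n) - (poly f (s n) - poly f \<alpha>))" .
  then show "val_ge v N (poly f \<alpha>)" by simp
qed

lemma newton_iteration:
  assumes f: "poly_over R f" and a: "a \<in> R" "\<phi> (poly f a) = 0" "\<phi> (poly (pderiv f) a) \<noteq> 0"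
    and s: "s 0 = a" "\<And>n. s (Suc n) = s n - poly f (s n) / poly (pderiv f) (s n)"
  shows "s n \<in> R" "\<phi> (s n) = \<phi> a" "val_ge v (int n) (poly f (s n))"
    "val_ge v (int n) (s (Suc n) - s n)"
proof -
  have unit: "\<phi> (poly (pderiv f) x) \<noteq> 0" if "x \<in> R" "\<phi> x = \<phi> a" for x
    using phi_poly[OF poly_over_val_ring_pderiv[OF f]] that a by metis
  have inv: "s n \<in> R \<and> \<phi> (s n) = \<phi> a \<and> val_ge v (int n + 1) (poly f (s n))" for n
  proof (induction n)
    case 0
    show ?case using a phi_eq_zero_iff poly_in_val_ring[OF f] by (simp add: s(1))
  next
    case (Suc n)
    then have x: "s n \<in> R" "\<phi> (s n) = \<phi> a" "val_ge v (int n + 1) (poly f (s n))" by auto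
    note step = newton_step[OF f x(1) unit[OF x(1,2)] _ x(3), folded s(2)]
    have hR: "poly f (s n) / poly (pderiv f) (s n) \<in> R"
      using val_ge_mono[OF step(1), of 0] by (simp add: val_ring_iff_val_ge)
    have "\<phi> (poly f (s n) / poly (pderiv f) (s n)) = 0"
      using phi_eq_zero_iff[OF hR] val_ge_mono[OF step(1), of 1] by simp
    moreover have "val_ge v (int (Suc n) + 1) (poly f (s (Suc n)))"
      using val_ge_mono[OF step(2), of "int (Suc n) + 1"] by simp
    ultimately show ?case using x hR by (simp add: s(2) val_ring_diff phi_diff)
  qed
  then show "s n \<in> R" "\<phi> (s n) = \<phi> a" by auto
  show "val_ge v (int n) (poly f (s n))"
    using inv[of n] val_ge_mono[of v "int n + 1" _ "int n"] by simp
  have "val_ge v (int n + 1) (poly f (s n) / poly (pderiv f) (s n))"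
    using newton_step(1)[OF f _ unit] inv[of n] by simp
  then show "val_ge v (int n) (s (Suc n) - s n)"
    using val_ge_mono[of v "int n + 1" _ "int n"] by (simp add: s(2) val_ge_uminus)
qed

end

locale complete_valued_field = valued_field +
  assumes v_complete: "v_complete v"
begin

lemma convergent_if_successive_val_ge:
  assumes steps: "\<And>n. val_ge v (int n) (s (Suc n) - s n)"
  shows "\<exists>\<alpha>. \<forall>N. \<exists>M. \<forall>n\<ge>M. val_ge v N (s n - \<alpha>)"
proof -
  have tail: "val_ge v (int n) (s m - s n)" if "n \<le> m" for m n
    using that
  proof (induction m rule: dec_induct)
    case (step m)
    have "val_ge v (int n) (s (Suc m) - s m)" using val_ge_mono[OF steps[of m]] step(1) by simp
    from val_ge_add[OF this step(3)] show ?case by simp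
  qed simp
  have "vclose v N (s m) (s n)" if "nat N \<le> m" "nat N \<le> n" for N m n
  proof -
    have "val_ge v (int (nat N)) (s m - s (nat N) - (s n - s (nat N)))"
      using val_ge_diff[OF tail tail] that .
    then have "val_ge v N (s m - s n)" using val_ge_mono[of v "int (nat N)" _ N] by simp
    then show ?thesis by (simp add: vclose_iff_val_ge)
  qed
  then show ?thesis using v_complete unfolding v_complete_def vclose_iff_val_ge by blast
qed

lemma hensel:
  assumes f: "poly_over R f" and a: "a \<in> R" "\<phi> (poly f a) = 0" "\<phi> (poly (pderiv f) a) \<noteq> 0"
  shows "\<exists>\<alpha>\<in>R. poly f \<alpha> = 0 \<and> \<phi> \<alpha> = \<phi> a"
proof -
  define s where "s n = ((\<lambda>x. x - poly f x / poly (pderiv f) x) ^^ n) a" for n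
  have "s 0 = a" "s (Suc n) = s n - poly f (s n) / poly (pderiv f) (s n)" for n
    by (simp_all add: s_def)
  note s = newton_iteration[OF f a this]
  obtain \<alpha> where lim: "\<And>N. \<exists>M. \<forall>n\<ge>M. val_ge v N (s n - \<alpha>)"
    using convergent_if_successive_val_ge[OF s(4)] by blast
  then obtain M where M: "val_ge v 1 (s M - \<alpha>)" by blast
  then have "s M - \<alpha> \<in> R" using val_ge_mono[OF M, of 0] by (simp add: val_ring_iff_val_ge)
  then have "\<alpha> \<in> R" using val_ring_diff[OF s(1)[of M]] by force
  moreover have "\<phi> \<alpha> = \<phi> a" using phi_eq_iff[OF s(1) \<open>\<alpha> \<in> R\<close>] M s(2) by metis
  moreover have "poly f \<alpha> = 0" using poly_limit_root[OF f s(1) s(3) \<open>\<alpha> \<in> R\<close> lim] .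
  ultimately show ?thesis by blast
qed

end

section \<open>Coefficient fields in equal characteristic zero\<close>

locale complete_valued_field_char_0 = complete_valued_field v \<phi>
  for v :: "'a::field_char_0 \<Rightarrow> int" and \<phi> :: "'a \<Rightarrow> 'b::field"
begin

lemma exists_residue_faithful_lift:
  assumes L: "subfield L" "L \<subseteq> R" and a: "a \<in> R"
  shows "\<exists>\<alpha>\<in>R. \<phi> \<alpha> = \<phi> a \<and> residue_faithful L \<alpha>"
proof (cases "\<exists>g. poly_over L g \<and> g \<noteq> 0 \<and> \<phi> (poly g a) = 0")
  case False
  then have "residue_faithful L a" unfolding residue_faithful_def by force
  then show ?thesis using a by blast
next
  case True
  then obtain f where f: "poly_over L f" "lead_coeff f = 1" "degree f > 0" "\<phi> (poly f a) = 0"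
    and min: "\<And>g. poly_over L g \<Longrightarrow> g \<noteq> 0 \<Longrightarrow> degree g < degree f \<Longrightarrow> \<phi> (poly g a) \<noteq> 0"
    using exists_min_degree_residual_relation[OF L a] by blast
  have fR: "poly_over R f" using poly_over_mono[OF f(1) L(2)] .
  have "\<phi> (poly (pderiv f) a) \<noteq> 0"
  proof (rule min)
    show "poly_over L (pderiv f)"
      using poly_over_pderiv[OF subfield_mult[OF L(1)] subfield_of_nat[OF L(1)] f(1)] .
    show "pderiv f \<noteq> 0" "degree (pderiv f) < degree f"
      using f(3) by (auto simp: pderiv_eq_0_iff degree_pderiv)
  qed
  then obtain \<alpha> where \<alpha>: "\<alpha> \<in> R" "poly f \<alpha> = 0" "\<phi> \<alpha> = \<phi> a"
    using hensel[OF fR a f(4)] by blast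
  have "residue_faithful L \<alpha>"
    unfolding residue_faithful_def
  proof (intro allI impI)
    fix p assume p: "poly_over L p" "\<phi> (poly p \<alpha>) = 0"
    obtain r where r: "poly_over L r" "degree r < degree f" "f dvd p - r"
      using poly_over_remainder[OF L(1) f(1-3) p(1)] by blast
    have p_r: "poly p \<alpha> = poly r \<alpha>"
      using r(3) \<alpha>(2) by (auto elim!: dvdE simp: algebra_simps)
    have "\<phi> (poly r a) = \<phi> (poly r \<alpha>)"
      using phi_poly[OF poly_over_mono[OF r(1) L(2)]] a \<alpha>(1,3) by simp
    then have "r = 0" using min[OF r(1) _ r(2)] p(2) p_r by auto
    then show "poly p \<alpha> = 0" using p_r by simp
  qed
  then show ?thesis using \<alpha> by blast
qed

lemma exists_coefficient_field:
  assumes F0: "subfield F0" "F0 \<subseteq> R"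
  shows "\<exists>L. subfield L \<and> L \<subseteq> R \<and> F0 \<subseteq> L \<and> \<phi> ` L = UNIV"
proof -
  define A where "A = {L. subfield L \<and> L \<subseteq> R \<and> F0 \<subseteq> L}"
  have "\<Union>C \<in> A" if "C \<noteq> {}" "subset.chain A C" for C
    using that subfield_Union_chain[of C] unfolding A_def subset_chain_def by blast
  moreover have "A \<noteq> {}" using F0 unfolding A_def by blast
  ultimately obtain M where M: "M \<in> A" and max: "\<And>L. L \<in> A \<Longrightarrow> M \<subseteq> L \<Longrightarrow> L = M"
    using subset_Zorn_nonempty[of A] by blast
  have "t \<in> \<phi> ` M" for t
  proof (rule ccontr)
    assume t: "t \<notin> \<phi> ` M"
    obtain a where "a \<in> R" "\<phi> a = t" using phi_surj by blast
    then obtain \<alpha> where \<alpha>: "\<alpha> \<in> R" "\<phi> \<alpha> = t" "residue_faithful M \<alpha>"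
      using exists_residue_faithful_lift[of M a] M unfolding A_def by blast
    have "adjoin M \<alpha> \<in> A"
      using M \<alpha> subfield_adjoin subset_adjoin adjoin_subset_val_ring unfolding A_def by blast
    then have "adjoin M \<alpha> = M" using max subset_adjoin M unfolding A_def by blast
    then show False using mem_adjoin[of M \<alpha>] M \<alpha>(2) t unfolding A_def by blast
  qed
  then show ?thesis using M unfolding A_def by blast
qed

lemma exists_section_fixing:
  assumes F0: "subfield F0" "F0 \<subseteq> R"
  obtains s where "\<And>y. s y \<in> R" "hom_on UNIV s" "\<And>y. \<phi> (s y) = y" "\<And>x. x \<in> F0 \<Longrightarrow> s (\<phi> x) = x"
proof -
  obtain L where L: "subfield L" "L \<subseteq> R" "F0 \<subseteq> L" "\<phi> ` L = UNIV"
    using exists_coefficient_field[OF F0] by blast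
  have inj: "inj_on \<phi> L" using inj_on_phi_subfield[OF L(1,2)] .
  define s where "s = the_inv_into L \<phi>"
  have sL: "s y \<in> L" for y unfolding s_def using the_inv_into_into[OF inj] L(4) by simp
  have phi_s: "\<phi> (s y) = y" for y unfolding s_def using f_the_inv_into_f[OF inj] L(4) by simp
  have s_eq: "s y = x" if "x \<in> L" "\<phi> x = y" for x y
    unfolding s_def using the_inv_into_f_eq[OF inj that(2,1)] .
  have "hom_on UNIV s" unfolding hom_on_def
  proof (intro conjI ballI)
    show "s 1 = 1" using s_eq subfield_one[OF L(1)] phi_one by blast
  next
    fix x y :: 'b
    have R: "s x \<in> R" "s y \<in> R" using sL L(2) by auto
    show "s (x + y) = s x + s y"
      using s_eq[of "s x + s y" "x + y"] subfield_add[OF L(1) sL sL] phi_add[OF R] phi_s by simp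
    show "s (x * y) = s x * s y"
      using s_eq[of "s x * s y" "x * y"] subfield_mult[OF L(1) sL sL] phi_mult[OF R] phi_s by simp
  qed
  moreover have "s (\<phi> x) = x" if "x \<in> F0" for x using s_eq that L(3) by blast
  ultimately show ?thesis using that sL L(2) phi_s by blast
qed

end

theorem proposition5:
  fixes v :: "'a::field_char_0 \<Rightarrow> int"
    and \<phi> :: "'a \<Rightarrow> 'b::field"
    and k F :: "'a set" and F' :: "'b set"
    and \<sigma> :: "'b \<Rightarrow> 'a" and \<omega> :: 'a
  assumes val: "discrete_valuation v"
    and compl: "v_complete v"
    and res: "residue_map v \<phi>"
    and k: "subfield k" "\<forall>c\<in>k. c \<noteq> 0 \<longrightarrow> v c = 0"
    and F: "subfield F" "k \<subseteq> F" "F \<subseteq> val_ring v"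
    and F': "subfield F'" "\<phi> ` k \<subseteq> F'" "\<phi> ` F \<subseteq> F'"
    and \<sigma>: "\<forall>y\<in>F'. \<sigma> y \<in> F" "hom_on F' \<sigma>" "\<forall>c\<in>k. \<sigma> (\<phi> c) = c"
           "\<forall>y\<in>F'. \<phi> (\<sigma> y) = y"
    and \<omega>: "\<omega> \<in> val_ring v" "\<omega> \<noteq> 0" "v \<omega> = 0"
  shows "(transcendental_over F' (\<phi> \<omega>) \<longrightarrow>
           (\<exists>\<sigma>'::'b \<Rightarrow> 'a. (\<forall>y. \<sigma>' y \<in> val_ring v) \<and> hom_on UNIV \<sigma>' \<and>
              (\<forall>c\<in>k. \<sigma>' (\<phi> c) = c) \<and> (\<forall>y. \<phi> (\<sigma>' y) = y) \<and>
              (\<forall>y\<in>F'. \<sigma>' y = \<sigma> y) \<and> transcendental_over F (\<sigma>' (\<phi> \<omega>))))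
       \<and> (algebraic_over F' (\<phi> \<omega>) \<longrightarrow>
           (\<exists>\<sigma>'::'b \<Rightarrow> 'a. (\<forall>y. \<sigma>' y \<in> val_ring v) \<and> hom_on UNIV \<sigma>' \<and>
              (\<forall>c\<in>k. \<sigma>' (\<phi> c) = c) \<and> (\<forall>y. \<phi> (\<sigma>' y) = y) \<and>
              (\<forall>y\<in>F'. \<sigma>' y = \<sigma> y) \<and> algebraic_over F (\<sigma>' (\<phi> \<omega>))))"
proof -
  interpret complete_valued_field_char_0 v \<phi>
    by unfold_locales (fact val res compl)+
  have "subfield (\<sigma> ` F')" using subfield_image_hom[OF F'(1) \<sigma>(2)] .
  moreover have "\<sigma> ` F' \<subseteq> val_ring v" using \<sigma>(1) F(3) by blast
  ultimately obtain s where s: "\<And>y. s y \<in> val_ring v" "hom_on UNIV s" "\<And>y. \<phi> (s y) = y"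
    "\<And>x. x \<in> \<sigma> ` F' \<Longrightarrow> s (\<phi> x) = x"
    using exists_section_fixing by blast
  have extends: "s y = \<sigma> y" if "y \<in> F'" for y
    using s(4)[of "\<sigma> y"] \<sigma>(4) that by simp
  have "s (\<phi> c) = c" if "c \<in> k" for c
    using extends \<sigma>(3) F'(2) that by auto
  moreover have "transcendental_over F (s (\<phi> \<omega>))" if "transcendental_over F' (\<phi> \<omega>)"
    using transcendental_if_residue_transcendental[OF F(1) F'(3) s(1)] that s(3) by simp
  moreover have "algebraic_over F (s (\<phi> \<omega>))" if "algebraic_over F' (\<phi> \<omega>)"
    using algebraic_over_hom_image[OF s(2) _ that] extends \<sigma>(1) by simp
  ultimately show ?thesis using s(1-3) extends by blast
qed

end
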